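(* Let $(X_n)_{n\in\mathbb{T}}$ ($\mathbb{T}$ one of $\mathbb{Z},\mathbb{N},\mathbb{N}\setminus\{0\}$) be a stationary, $(\mathbb{L}_\infty,\Psi)$-weakly dependent sequence of $\mathbb{R}^d$-valued random variables such that $X_1$ is supported on a compact set $\mathbb{M}$. Then for any $\epsilon>0$ and any sequences of positive integers $k_n,r_n$ with $k_nr_n\le n$, $$\mathbb{P}\big(d_H(\mathbb{X}_n,\mathbb{M})>\epsilon\big)\le\frac{k_n^2\Psi(r_n)+k_n\exp\big(-[\tfrac{k_n}{2}]\rho_{r_n}(\epsilon/2)\big)}{k_n\rho_{r_n}(\epsilon/4)}.$$ Suppose moreover that for some $b>1$ and every sufficiently small $\epsilon>0$, $$\lim_{m\to\infty}\rho_m(\epsilon)\frac{e^{m^{b}}}{m^{1+b}}=\infty\quad\text{and}\quad\lim_{m\to\infty}\frac{e^{2m^{b}}}{m^2}\Psi(m)=0.$$ Then $(X_n)_{n\in\mathbb{T}}$ is asymptotically $(\epsilon,\alpha)$-dense in $\mathbb{M}$.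
   Context: The sequence is $(\mathbb{L}_\infty,\Psi)$-weakly dependent if there is a non-increasing function $\Psi$ with $\Psi(r)\to0$ as $r\to\infty$ such that for all bounded measurable (nonzero) $f,g$ and all indices $i_1\le\cdots\le i_k<i_k+r\le i_{k+1}\le\cdots\le i_n$, $\big|\mathrm{Cov}\big(f(X_{i_1},\ldots,X_{i_k})/\|f\|_\infty,\ g(X_{i_{k+1}},\ldots,X_{i_n})/\|g\|_\infty\big)\big|\le\Psi(r)$. $\mathbb{X}_n=\{X_1,\ldots,X_n\}$; $[\cdot]$ is the integer part. For $p\ge1$, $\rho_p(\epsilon)=\inf_{x\in\mathbb{M}_{dp}}\mathbb{P}(\|(X_1,\ldots,X_p)^t-x\|\le\epsilon)$, with $\mathbb{M}_{dp}$ the support of $(X_1,\ldots,X_p)^t$. $d_H$ is the Hausdorff distance. The sequence is asymptotically $(\epsilon,\alpha)$-dense in $\mathbb{M}$ if for every sufficiently small $\epsilon>0$ and every $\alpha\in(0,1)$ there is $n_0$ with $\mathbb{P}(d_H(\mathbb{X}_n,\mathbb{M})\le\epsilon)\ge1-\alpha$ for all $n\ge n_0$. *)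

theory Defs
  imports "HOL-Probability.Probability"
begin

definition hausdorff_dist :: "'a::metric_space set \<Rightarrow> 'a set \<Rightarrow> real" where
  "hausdorff_dist S T = max (SUP x\<in>S. infdist x T) (SUP y\<in>T. infdist y S)"

definition sample_set :: "(int \<Rightarrow> 'w \<Rightarrow> 'b) \<Rightarrow> nat \<Rightarrow> 'w \<Rightarrow> 'b set" where
  "sample_set X n w = {X (int t) w | t. t \<in> {1..n}}"

definition rv_support :: "'w measure \<Rightarrow> ('w \<Rightarrow> 'b::metric_space) \<Rightarrow> 'b set" where
  "rv_support M Y = {x. \<forall>e>0. measure M {w \<in> space M. dist (Y w) x < e} > 0}"

definition block_dist :: "(int \<Rightarrow> 'w \<Rightarrow> 'b::euclidean_space) \<Rightarrow> nat \<Rightarrow> (nat \<Rightarrow> 'b) \<Rightarrow> 'w \<Rightarrow> real" where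
  "block_dist X p x w = sqrt (\<Sum>i<p. (norm (X (int i + 1) w - x i))\<^sup>2)"

definition block_support :: "'w measure \<Rightarrow> (int \<Rightarrow> 'w \<Rightarrow> 'b::euclidean_space) \<Rightarrow> nat \<Rightarrow> (nat \<Rightarrow> 'b) set" where
  "block_support M X p = {x. (\<forall>i\<ge>p. x i = 0) \<and>
      (\<forall>e>0. measure M {w \<in> space M. block_dist X p x w < e} > 0)}"

definition rho :: "'w measure \<Rightarrow> (int \<Rightarrow> 'w \<Rightarrow> 'b::euclidean_space) \<Rightarrow> nat \<Rightarrow> real \<Rightarrow> real" where
  "rho M X p eps = (INF x\<in>block_support M X p. measure M {w \<in> space M. block_dist X p x w \<le> eps})"

definition stationary_on :: "'w measure \<Rightarrow> int set \<Rightarrow> (int \<Rightarrow> 'w \<Rightarrow> 'b::topological_space) \<Rightarrow> bool" where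
  "stationary_on M T X \<longleftrightarrow>
    (\<forall>(n::nat) (i::nat \<Rightarrow> int) (h::int).
       (\<forall>j<n. i j \<in> T \<and> i j + h \<in> T) \<longrightarrow>
       distr M (PiM {..<n} (\<lambda>_. borel)) (\<lambda>w. \<lambda>j\<in>{..<n}. X (i j) w) =
       distr M (PiM {..<n} (\<lambda>_. borel)) (\<lambda>w. \<lambda>j\<in>{..<n}. X (i j + h) w))"

definition sup_norm :: "'a measure \<Rightarrow> ('a \<Rightarrow> real) \<Rightarrow> real" where
  "sup_norm N f = (SUP x\<in>space N. \<bar>f x\<bar>)"

definition cov :: "'w measure \<Rightarrow> ('w \<Rightarrow> real) \<Rightarrow> ('w \<Rightarrow> real) \<Rightarrow> real" where
  "cov M U V = (\<integral>w. U w * V w \<partial>M) - (\<integral>w. U w \<partial>M) * (\<integral>w. V w \<partial>M)"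

definition weakly_dependent_on ::
  "'w measure \<Rightarrow> int set \<Rightarrow> (int \<Rightarrow> 'w \<Rightarrow> 'b::topological_space) \<Rightarrow> (nat \<Rightarrow> real) \<Rightarrow> bool" where
  "weakly_dependent_on M T X \<Psi> \<longleftrightarrow>
    antimono \<Psi> \<and> \<Psi> \<longlonglongrightarrow> 0 \<and>
    (\<forall>(k::nat) (l::nat) (i::nat \<Rightarrow> int) (j::nat \<Rightarrow> int) (r::nat)
       (f::(nat \<Rightarrow> 'b) \<Rightarrow> real) (g::(nat \<Rightarrow> 'b) \<Rightarrow> real).
       k \<ge> 1 \<and> l \<ge> 1 \<and> r \<ge> 1 \<and>
       (\<forall>a<k. i a \<in> T) \<and> (\<forall>a<l. j a \<in> T) \<and>
       (\<forall>a. Suc a < k \<longrightarrow> i a \<le> i (Suc a)) \<and>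
       (\<forall>a. Suc a < l \<longrightarrow> j a \<le> j (Suc a)) \<and>
       i (k - 1) + int r \<le> j 0 \<and>
       f \<in> borel_measurable (PiM {..<k} (\<lambda>_. borel)) \<and>
       g \<in> borel_measurable (PiM {..<l} (\<lambda>_. borel)) \<and>
       bounded (f ` space (PiM {..<k} (\<lambda>_. borel))) \<and>
       bounded (g ` space (PiM {..<l} (\<lambda>_. borel))) \<and>
       (\<exists>x\<in>space (PiM {..<k} (\<lambda>_. borel)). f x \<noteq> 0) \<and>
       (\<exists>y\<in>space (PiM {..<l} (\<lambda>_. borel)). g y \<noteq> 0)
     \<longrightarrow>
       \<bar>cov M (\<lambda>w. f (\<lambda>a\<in>{..<k}. X (i a) w) / sup_norm (PiM {..<k} (\<lambda>_. borel)) f)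
               (\<lambda>w. g (\<lambda>a\<in>{..<l}. X (j a) w) / sup_norm (PiM {..<l} (\<lambda>_. borel)) g)\<bar>
       \<le> \<Psi> r)"

definition asymp_dense :: "'w measure \<Rightarrow> (int \<Rightarrow> 'w \<Rightarrow> 'b::metric_space) \<Rightarrow> 'b set \<Rightarrow> bool" where
  "asymp_dense M X S \<longleftrightarrow>
    (\<exists>e0>0. \<forall>eps. 0 < eps \<and> eps < e0 \<longrightarrow>
       (\<forall>\<alpha>. 0 < \<alpha> \<and> \<alpha> < 1 \<longrightarrow>
          (\<exists>n0. \<forall>n\<ge>n0.
             measure M {w \<in> space M. hausdorff_dist (sample_set X n w) S \<le> eps} \<ge> 1 - \<alpha>)))"

end

theory Submission
  imports Defs
begin

(* Cover the support of the block (X_1, ..., X_r) by a maximal eps/2-separated family C: the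
   eps/4-balls around its points are disjoint events of probability at least rho_r(eps/4), so C has
   at most 1/rho_r(eps/4) elements. If the sample misses the eps-ball around some y in the support,
   take a support block z starting near y and c in C close to z; then each of the [k/2] blocks of the
   sample starting at the times 2qr stays eps/2-away from c, since otherwise its first observation
   would come close to y. These blocks are separated by gaps of length r, so weak dependence bounds
   the probability that all of them avoid the eps/2-ball around c by
   (1 - rho_r(eps/2))^[k/2] + k Psi(r), and a union bound over C gives the inequality.
   Under the growth conditions, r large and k about 2 exp (r^b) make the bound as small as wanted. *)

section \<open>Finite nets in pseudometric spaces\<close>

lemma obtain_max_card:
  assumes "P A" and "\<And>B. P B \<Longrightarrow> card B \<le> n"
  obtains B where "P B" "\<And>B'. P B' \<Longrightarrow> card B' \<le> card B"
proof -
  have "\<exists>k. (\<exists>B. P B \<and> card B = k) \<and> (\<forall>k'. (\<exists>B. P B \<and> card B = k') \<longrightarrow> k' \<le> k)"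
    by (rule Nat.ex_has_greatest_nat[where k="card A" and b=n]) (use assms in auto)
  then obtain k B where "P B" "card B = k" "\<And>B'. P B' \<Longrightarrow> card B' \<le> k" by blast
  then show ?thesis using that by blast
qed

locale pseudometric =
  fixes \<delta> :: "'a \<Rightarrow> 'a \<Rightarrow> real"
  assumes self [simp]: "\<delta> x x = 0"
    and commute: "\<delta> x y = \<delta> y x"
    and triangle: "\<delta> x y \<le> \<delta> x z + \<delta> z y"
begin

lemma card_separated_mult_le_1:
  assumes "prob_space M" and "finite C"
    and separated: "\<And>a b. a \<in> C \<Longrightarrow> b \<in> C \<Longrightarrow> a \<noteq> b \<Longrightarrow> \<delta> a b > 2 * d"
    and ball_sets: "\<And>c. c \<in> C \<Longrightarrow> {w \<in> space M. \<delta> (Y w) c \<le> d} \<in> sets M"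
    and ball_mass: "\<And>c. c \<in> C \<Longrightarrow> \<rho> \<le> measure M {w \<in> space M. \<delta> (Y w) c \<le> d}"
  shows "real (card C) * \<rho> \<le> 1"
proof -
  interpret prob_space M by fact
  define E where "E c = {w \<in> space M. \<delta> (Y w) c \<le> d}" for c
  have "disjoint_family_on E C"
    unfolding disjoint_family_on_def
  proof (intro ballI impI)
    fix a b assume ab: "a \<in> C" "b \<in> C" "a \<noteq> b"
    have "\<delta> a b \<le> 2 * d" if "w \<in> E a" "w \<in> E b" for w
    proof -
      have "\<delta> a b \<le> \<delta> (Y w) a + \<delta> (Y w) b"
        using triangle[of a b "Y w"] commute[of a "Y w"] by linarith
      then show ?thesis using that unfolding E_def by simp
    qed
    then show "E a \<inter> E b = {}" using separated[OF ab] by fastforce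
  qed
  have "real (card C) * \<rho> = (\<Sum>c\<in>C. \<rho>)" by simp
  also have "\<dots> \<le> (\<Sum>c\<in>C. measure M (E c))"
    using ball_mass unfolding E_def by (rule sum_mono)
  also have "\<dots> = measure M (\<Union>c\<in>C. E c)"
    using \<open>finite C\<close> ball_sets \<open>disjoint_family_on E C\<close> unfolding E_def
    by (intro finite_measure_finite_Union[symmetric]) auto
  also have "\<dots> \<le> 1" by (rule prob_le_1)
  finally show ?thesis .
qed

lemma obtain_finite_net:
  assumes "prob_space M" and "\<rho> > 0" and "0 \<le> d"
    and ball_sets: "\<And>x. x \<in> A \<Longrightarrow> {w \<in> space M. \<delta> (Y w) x \<le> d} \<in> sets M"
    and ball_mass: "\<And>x. x \<in> A \<Longrightarrow> \<rho> \<le> measure M {w \<in> space M. \<delta> (Y w) x \<le> d}"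
  obtains C where "finite C" "C \<subseteq> A" "real (card C) * \<rho> \<le> 1"
    and "\<And>z. z \<in> A \<Longrightarrow> \<exists>c\<in>C. \<delta> z c \<le> 2 * d"
proof -
  define separated where
    "separated C \<longleftrightarrow> finite C \<and> C \<subseteq> A \<and> (\<forall>a\<in>C. \<forall>b\<in>C. a \<noteq> b \<longrightarrow> \<delta> a b > 2 * d)" for C
  have small: "real (card C) * \<rho> \<le> 1" if "separated C" for C
  proof -
    have "finite C" "C \<subseteq> A" and "\<And>a b. a \<in> C \<Longrightarrow> b \<in> C \<Longrightarrow> a \<noteq> b \<Longrightarrow> \<delta> a b > 2 * d"
      using that unfolding separated_def by auto
    then show ?thesis
      using card_separated_mult_le_1[OF \<open>prob_space M\<close>, of C d Y \<rho>] ball_sets ball_mass by blast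
  qed
  have "card C \<le> nat \<lceil>1 / \<rho>\<rceil>" if "separated C" for C
  proof -
    have "real (card C) \<le> 1 / \<rho>"
      using small[OF that] \<open>\<rho> > 0\<close> by (simp add: pos_le_divide_eq)
    then show ?thesis by linarith
  qed
  moreover have "separated {}" unfolding separated_def by simp
  ultimately obtain C where C: "separated C" and maximal: "\<And>C'. separated C' \<Longrightarrow> card C' \<le> card C"
    using obtain_max_card[of separated] by blast
  have "\<exists>c\<in>C. \<delta> z c \<le> 2 * d" if "z \<in> A" for z
  proof (rule ccontr)
    assume "\<not> ?thesis"
    then have far: "\<forall>c\<in>C. \<delta> z c > 2 * d" by (simp add: not_le)
    then have "z \<notin> C" using \<open>0 \<le> d\<close> by fastforce
    have "\<forall>a\<in>insert z C. \<forall>b\<in>insert z C. a \<noteq> b \<longrightarrow> \<delta> a b > 2 * d"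
      using C far commute[of z] unfolding separated_def by (metis insert_iff)
    then have "separated (insert z C)"
      using C \<open>z \<in> A\<close> unfolding separated_def by simp
    then have "card (insert z C) \<le> card C" by (rule maximal)
    then show False using C \<open>z \<notin> C\<close> unfolding separated_def by simp
  qed
  moreover have "finite C" "C \<subseteq> A" using C unfolding separated_def by simp_all
  ultimately show ?thesis using that small[OF C] by blast
qed

end

section \<open>Distances between blocks\<close>

definition block_metric :: "nat \<Rightarrow> (nat \<Rightarrow> 'b::real_normed_vector) \<Rightarrow> (nat \<Rightarrow> 'b) \<Rightarrow> real" where
  "block_metric r a b = L2_set (\<lambda>i. norm (a i - b i)) {..<r}"

lemma block_metric_triangle: "block_metric r a b \<le> block_metric r a c + block_metric r c b"
proof -
  have "block_metric r a b \<le> L2_set (\<lambda>i. norm (a i - c i) + norm (c i - b i)) {..<r}"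
    unfolding block_metric_def by (intro L2_set_mono norm_diff_triangle_le) auto
  also have "\<dots> \<le> block_metric r a c + block_metric r c b"
    unfolding block_metric_def by (rule L2_set_triangle_ineq)
  finally show ?thesis .
qed

interpretation block_metric: pseudometric "block_metric r" for r
proof
  fix a b c :: "nat \<Rightarrow> 'b::real_normed_vector"
  show "block_metric r a a = 0" by (simp add: block_metric_def L2_set_def)
  show "block_metric r a b = block_metric r b a"
    unfolding block_metric_def by (intro L2_set_cong) (auto simp: norm_minus_commute)
  show "block_metric r a b \<le> block_metric r a c + block_metric r c b"
    by (rule block_metric_triangle)
qed

lemma norm_le_block_metric: "i < r \<Longrightarrow> norm (a i - b i) \<le> block_metric r a b"
  unfolding block_metric_def by (intro member_le_L2_set) auto

lemma block_metric_cong: "(\<And>i. i < r \<Longrightarrow> a i = a' i) \<Longrightarrow> block_metric r a b = block_metric r a' b"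
  unfolding block_metric_def by (intro L2_set_cong) auto

lemma continuous_on_block_metric: "continuous_on UNIV (\<lambda>a. block_metric r a b)"
  unfolding block_metric_def L2_set_def
  by (intro continuous_intros continuous_on_product_coordinates)

lemma measurable_block_metric_PiM:
  fixes y :: "nat \<Rightarrow> 'b::euclidean_space"
  assumes "\<And>p. p < r \<Longrightarrow> s + p \<in> I"
  shows "(\<lambda>z. block_metric r (\<lambda>p. z (s + p)) y) \<in> borel_measurable (PiM I (\<lambda>_. borel))"
proof -
  have "(\<lambda>z. (norm (z (s + p) - y p))\<^sup>2) \<in> borel_measurable (PiM I (\<lambda>_. borel))" if "p < r" for p
    by (intro borel_measurable_power measurable_compose[OF _ borel_measurable_norm] borel_measurable_diff
        measurable_component_singleton[OF assms[OF that]] borel_measurable_const)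
  then show ?thesis
    unfolding block_metric_def L2_set_def
    by (intro measurable_compose[OF _ borel_measurable_sqrt] borel_measurable_sum) auto
qed

lemma sets_block_far_PiM:
  fixes y :: "nat \<Rightarrow> 'b::euclidean_space"
  shows "{z \<in> space (PiM {..<r} (\<lambda>_. borel)). block_metric r z y > h} \<in> sets (PiM {..<r} (\<lambda>_. borel))"
proof -
  have "(\<lambda>z. block_metric r (\<lambda>p. z (0 + p)) y) \<in> borel_measurable (PiM {..<r} (\<lambda>_. borel))"
    by (intro measurable_block_metric_PiM) simp
  then show ?thesis by simp
qed

lemma sets_blocks_far_PiM:
  fixes y :: "nat \<Rightarrow> 'b::euclidean_space"
  shows "{z \<in> space (PiM {..<m * r} (\<lambda>_. borel)). \<forall>q\<in>{..<m}. block_metric r (\<lambda>p. z (q * r + p)) y > h}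
    \<in> sets (PiM {..<m * r} (\<lambda>_. borel))"
proof (intro sets.sets_Collect_finite_All)
  fix q assume "q \<in> {..<m}"
  then have "q * r + p < m * r" if "p < r" for p
    using that mult_le_mono1[of "Suc q" m r] by simp
  then have "(\<lambda>z. block_metric r (\<lambda>p. z (q * r + p)) y) \<in> borel_measurable (PiM {..<m * r} (\<lambda>_. borel))"
    by (intro measurable_block_metric_PiM) simp
  then show "{z \<in> space (PiM {..<m * r} (\<lambda>_. borel)). block_metric r (\<lambda>p. z (q * r + p)) y > h}
      \<in> sets (PiM {..<m * r} (\<lambda>_. borel))"
    by measurable
qed simp

lemma block_metric_gt_if_first_entry_far:
  fixes a z c :: "nat \<Rightarrow> 'b::real_normed_vector"
  assumes "0 < r" "a 0 \<in> F" "block_metric r z c \<le> e" "dist (z 0) y + 2 * e < infdist y F"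
  shows "e < block_metric r a c"
proof (rule ccontr)
  assume "\<not> e < block_metric r a c"
  then have "block_metric r a z \<le> 2 * e"
    using block_metric.triangle[of r a z c] block_metric.commute[of r z c] assms(3) by linarith
  then have "dist (a 0) (z 0) \<le> 2 * e"
    using norm_le_block_metric[OF assms(1), of a z] by (simp add: dist_norm)
  then have "dist y (a 0) < infdist y F"
    using dist_triangle[of y "a 0" "z 0"] dist_commute[of y "z 0"] dist_commute[of "z 0" "a 0"] assms(4)
    by linarith
  with infdist_le[OF assms(2), of y] show False by linarith
qed

definition interleaved_index :: "nat \<Rightarrow> nat \<Rightarrow> nat" where
  "interleaved_index r a = a + a div r * r"

lemma interleaved_index_block: "p < r \<Longrightarrow> interleaved_index r (q * r + p) = 2 * q * r + p"
  unfolding interleaved_index_def by simp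

lemma interleaved_index_le_Suc: "interleaved_index r a \<le> interleaved_index r (Suc a)"
  unfolding interleaved_index_def by (intro add_mono mult_le_mono1 div_le_mono) simp_all

lemma interleaved_index_last:
  assumes "1 \<le> m" "1 \<le> r"
  shows "interleaved_index r (m * r - 1) + r \<le> 2 * m * r"
proof -
  have "m * r - 1 = (m - 1) * r + (r - 1)" using assms by (cases m; cases r) (auto simp: algebra_simps)
  then have "interleaved_index r (m * r - 1) = 2 * (m - 1) * r + (r - 1)"
    using interleaved_index_block[of "r - 1" r "m - 1"] assms by simp
  then show ?thesis using assms by (cases m; cases r) (auto simp: algebra_simps)
qed

section \<open>Supports\<close>

text \<open>By Lindelof, countably many of the null neighbourhoods already cover \<open>Z\<close>.\<close>
lemma AE_not_in_locally_null:
  fixes Y :: "'w \<Rightarrow> 'c::second_countable_topology"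
  assumes "\<And>x. x \<in> Z \<Longrightarrow> \<exists>U. open U \<and> x \<in> U \<and> {w \<in> space M. Y w \<in> U} \<in> null_sets M"
  shows "AE w in M. Y w \<notin> Z"
proof -
  have "\<forall>x\<in>Z. \<exists>U. open U \<and> x \<in> U \<and> {w \<in> space M. Y w \<in> U} \<in> null_sets M"
    using assms by blast
  then obtain U where U: "\<forall>x\<in>Z. open (U x) \<and> x \<in> U x \<and> {w \<in> space M. Y w \<in> U x} \<in> null_sets M"
    by (rule bchoice[THEN exE])
  then have "\<And>V. V \<in> U ` Z \<Longrightarrow> open V" by blast
  then obtain F where F: "F \<subseteq> U ` Z" "countable F" "\<Union>F = \<Union>(U ` Z)"
    by (rule Lindelof)
  have "(\<Union>V\<in>F. {w \<in> space M. Y w \<in> V}) \<in> null_sets M"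
  proof (rule null_sets_UN')
    fix V assume "V \<in> F"
    then obtain x where "x \<in> Z" "V = U x" using F(1) by blast
    then show "{w \<in> space M. Y w \<in> V} \<in> null_sets M" using U by simp
  qed (rule F(2))
  moreover have "{w \<in> space M. \<not> Y w \<notin> Z} \<subseteq> (\<Union>V\<in>F. {w \<in> space M. Y w \<in> V})"
  proof
    fix w assume "w \<in> {w \<in> space M. \<not> Y w \<notin> Z}"
    then have "w \<in> space M" "Y w \<in> \<Union>(U ` Z)" using U by auto
    then show "w \<in> (\<Union>V\<in>F. {w \<in> space M. Y w \<in> V})" unfolding F(3)[symmetric] by blast
  qed
  ultimately show ?thesis by (rule AE_I')
qed

lemma AE_mem_support:
  fixes Y :: "'w \<Rightarrow> 'c::second_countable_topology" and \<delta> :: "'c \<Rightarrow> 'c \<Rightarrow> real"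
  assumes "finite_measure M"
    and continuous: "\<And>x. continuous_on UNIV (\<lambda>v. \<delta> v x)" and self: "\<And>x. \<delta> x x = 0"
    and measurable: "\<And>x. (\<lambda>w. \<delta> (Y w) x) \<in> borel_measurable M"
  shows "AE w in M. \<forall>e>0. measure M {w' \<in> space M. \<delta> (Y w') (Y w) < e} > 0"
proof -
  have "AE w in M. Y w \<notin> {x. \<not> (\<forall>e>0. measure M {w \<in> space M. \<delta> (Y w) x < e} > 0)}"
  proof (rule AE_not_in_locally_null)
    fix x assume "x \<in> {x. \<not> (\<forall>e>0. measure M {w \<in> space M. \<delta> (Y w) x < e} > 0)}"
    then obtain e where "e > 0" "\<not> measure M {w \<in> space M. \<delta> (Y w) x < e} > 0" by blast
    then have "e > 0" "measure M {w \<in> space M. \<delta> (Y w) x < e} = 0" by (simp_all add: order.antisym)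
    moreover have "{w \<in> space M. \<delta> (Y w) x < e} \<in> sets M" using measurable[of x] by measurable
    ultimately have "{w \<in> space M. Y w \<in> {v. \<delta> v x < e}} \<in> null_sets M"
      by (simp add: null_sets_def finite_measure.emeasure_eq_measure[OF \<open>finite_measure M\<close>])
    moreover have "open {v. \<delta> v x < e}" using continuous[of x] by (rule open_Collect_less) simp
    ultimately show "\<exists>U. open U \<and> x \<in> U \<and> {w \<in> space M. Y w \<in> U} \<in> null_sets M"
      using self[of x] \<open>e > 0\<close> by (intro exI[of _ "{v. \<delta> v x < e}"]) simp
  qed
  then show ?thesis by simp
qed

lemma rho_le_measure:
  "x \<in> block_support M X r \<Longrightarrow> rho M X r c \<le> measure M {w \<in> space M. block_dist X r x w \<le> c}"
  unfolding rho_def by (intro cINF_lower bdd_belowI2[where m=0]) auto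

section \<open>Covariances of indicators\<close>

lemma cov_cong:
  assumes "\<And>w. w \<in> space M \<Longrightarrow> U w = U' w" and "\<And>w. w \<in> space M \<Longrightarrow> V w = V' w"
  shows "cov M U V = cov M U' V'"
proof -
  have "integral\<^sup>L M U = integral\<^sup>L M U'" "integral\<^sup>L M V = integral\<^sup>L M V'"
    "(\<integral>w. U w * V w \<partial>M) = (\<integral>w. U' w * V' w \<partial>M)"
    using assms by (auto intro: Bochner_Integration.integral_cong)
  then show ?thesis unfolding cov_def by simp
qed

lemma cov_indicator:
  assumes "A \<in> sets M" "B \<in> sets M"
  shows "cov M (indicator A) (indicator B) = measure M (A \<inter> B) - measure M A * measure M B"
  using sets.sets_into_space[OF assms(1)] sets.sets_into_space[OF assms(2)]
  unfolding cov_def indicator_inter_arith[symmetric] by (simp add: Int_absorb2 le_infI1)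

lemma sup_norm_indicator:
  assumes "x \<in> space N" "x \<in> A"
  shows "sup_norm N (indicator A :: _ \<Rightarrow> real) = 1"
  unfolding sup_norm_def
proof (rule cSup_eq_maximum)
  show "1 \<in> (\<lambda>x. \<bar>indicator A x :: real\<bar>) ` space N" using assms by force
qed (auto simp: indicator_def)

lemma bounded_indicator_image: "bounded ((indicator A :: _ \<Rightarrow> real) ` S)"
  by (rule bounded_subset[OF finite_imp_bounded[of "{0, 1}"]]) (auto simp: indicator_def)

section \<open>Hausdorff distance to a finite set\<close>

lemma bdd_above_infdist_image:
  fixes F S :: "'a::metric_space set"
  assumes "bounded S" "x \<in> F"
  shows "bdd_above ((\<lambda>y. infdist y F) ` S)"
proof -
  obtain c e where ce: "\<And>y. y \<in> S \<Longrightarrow> dist c y \<le> e"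
    using assms(1) unfolding bounded_def by blast
  have "infdist y F \<le> e + dist c x" if "y \<in> S" for y
    using infdist_le[OF assms(2), of y] dist_triangle3[of y x c] ce[OF that] by linarith
  then show ?thesis by (rule bdd_aboveI2)
qed

lemma obtain_point_far_from_subset:
  fixes F S :: "'a::metric_space set"
  assumes "F \<subseteq> S" "F \<noteq> {}" "bounded S" "0 \<le> e" "hausdorff_dist F S > e"
  obtains y where "y \<in> S" "infdist y F > e"
proof -
  have "(SUP x\<in>F. infdist x S) = 0"
    using assms(1,2) by (simp add: infdist_zero subset_eq cong: SUP_cong)
  then have "(SUP y\<in>S. infdist y F) > e"
    using assms(4,5) unfolding hausdorff_dist_def by linarith
  moreover obtain x where "x \<in> F" using assms(2) by blast
  then have "S \<noteq> {}" "bdd_above ((\<lambda>y. infdist y F) ` S)"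
    using assms(1) bdd_above_infdist_image[OF assms(3)] by auto
  ultimately show ?thesis
    using that less_cSUP_iff[of S "\<lambda>y. infdist y F" e] by blast
qed

lemma hausdorff_dist_le_iff:
  fixes F S :: "'a::heine_borel set"
  assumes "finite F" "F \<noteq> {}" "compact S" "S \<noteq> {}" "D \<subseteq> S" "S \<subseteq> closure D"
  shows "hausdorff_dist F S \<le> e \<longleftrightarrow> (\<forall>x\<in>F. infdist x S \<le> e) \<and> (\<forall>y\<in>D. \<exists>x\<in>F. dist y x \<le> e)"
proof -
  obtain x where "x \<in> F" using assms(2) by blast
  have "(SUP y\<in>S. infdist y F) \<le> e \<longleftrightarrow> (\<forall>y\<in>S. infdist y F \<le> e)"
    using assms(4) bdd_above_infdist_image[OF compact_imp_bounded[OF assms(3)] \<open>x \<in> F\<close>]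
    by (rule cSUP_le_iff)
  also have "\<dots> \<longleftrightarrow> (\<forall>y\<in>D. infdist y F \<le> e)"
  proof
    assume "\<forall>y\<in>D. infdist y F \<le> e"
    moreover have "closed {y. infdist y F \<le> e}"
      by (intro closed_Collect_le continuous_on_infdist continuous_on_id continuous_on_const)
    ultimately have "closure D \<subseteq> {y. infdist y F \<le> e}" by (intro closure_minimal) auto
    then show "\<forall>y\<in>S. infdist y F \<le> e" using assms(6) by blast
  qed (use assms(5) in blast)
  also have "\<dots> \<longleftrightarrow> (\<forall>y\<in>D. \<exists>x\<in>F. dist y x \<le> e)"
  proof -
    have "infdist y F \<le> e \<longleftrightarrow> (\<exists>x\<in>F. dist y x \<le> e)" for y
    proof
      assume "infdist y F \<le> e"
      moreover obtain x where "x \<in> F" "infdist y F = dist y x"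
        using infdist_attains_inf[OF finite_imp_closed[OF assms(1)] assms(2)] by blast
      ultimately show "\<exists>x\<in>F. dist y x \<le> e" by auto
    qed (use infdist_le order_trans in blast)
    then show ?thesis by simp
  qed
  finally have "(SUP y\<in>S. infdist y F) \<le> e \<longleftrightarrow> (\<forall>y\<in>D. \<exists>x\<in>F. dist y x \<le> e)" .
  moreover have "(SUP x\<in>F. infdist x S) \<le> e \<longleftrightarrow> (\<forall>x\<in>F. infdist x S \<le> e)"
    using assms(1,2) by (intro cSUP_le_iff) auto
  ultimately show ?thesis
    unfolding hausdorff_dist_def max.bounded_iff by simp
qed

section \<open>Choice of the block parameters\<close>

lemma inverse_le_of_ratio_le:
  fixes r P \<rho> :: real
  assumes "1 \<le> r" "r \<le> P" "r * P / exp P \<le> \<rho>"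
  shows "0 < \<rho>" and "1 / \<rho> \<le> exp P / (r * P)"
proof -
  have "0 < r * P / exp P" using assms(1,2) by simp
  then show "0 < \<rho>" using assms(3) by linarith
  then have "0 < \<rho> * (r * P / exp P)" using \<open>0 < r * P / exp P\<close> by (rule mult_pos_pos)
  from divide_left_mono[OF assms(3) zero_le_one this] show "1 / \<rho> \<le> exp P / (r * P)" by simp
qed

lemma dependence_term_le:
  fixes k r P \<rho> \<psi> :: real
  assumes "0 < k" "k \<le> 4 * exp P" "1 \<le> r" "r \<le> P" "r * P / exp P \<le> \<rho>" "0 \<le> \<psi>"
  shows "k * \<psi> / \<rho> \<le> 4 * (exp P * exp P / (r * r) * \<psi>)"
proof -
  have "r * r \<le> r * P" using assms(3,4) by (simp add: mult_left_mono)
  have "1 * 1 \<le> r * r" using assms(3) by (intro mult_mono) auto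
  have "k * \<psi> / \<rho> = k * \<psi> * (1 / \<rho>)" by simp
  also have "\<dots> \<le> (4 * exp P) * \<psi> * (exp P / (r * P))"
    using assms inverse_le_of_ratio_le[OF assms(3-5)] by (intro mult_mono) auto
  also have "\<dots> \<le> (4 * exp P) * \<psi> * (exp P / (r * r))"
    using assms(3,4,6) \<open>r * r \<le> r * P\<close> \<open>1 * 1 \<le> r * r\<close> by (intro mult_left_mono divide_left_mono) auto
  finally show ?thesis by (simp add: mult_ac)
qed

lemma deviation_term_le:
  fixes m r P \<rho> \<rho>' :: real
  assumes "exp P \<le> m" "1 \<le> r" "r \<le> P" "r * P / exp P \<le> \<rho>" "r * P / exp P \<le> \<rho>'"
  shows "exp (- m * \<rho>') / \<rho> \<le> exp (1 - r)"
proof -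
  have "1 \<le> P" using assms(2,3) by simp
  have "1 * 1 \<le> r * P" using assms(2) \<open>1 \<le> P\<close> by (intro mult_mono) auto
  then have "1 \<le> r * P" by simp
  have "0 \<le> m" using assms(1) exp_gt_zero[of P] by linarith
  have "r * P = exp P * (r * P / exp P)" by simp
  also have "\<dots> \<le> m * \<rho>'"
    using assms(1,5) \<open>1 \<le> r * P\<close> \<open>0 \<le> m\<close> by (intro mult_mono) auto
  finally have "exp (- m * \<rho>') * (1 / \<rho>) \<le> exp (- (r * P)) * (exp P / (r * P))"
    using inverse_le_of_ratio_le[OF assms(2-4)] by (intro mult_mono) auto
  also have "\<dots> \<le> exp (- (r * P)) * exp P"
    using \<open>1 \<le> r * P\<close> by (intro mult_left_mono) (auto simp: divide_le_eq)
  also have "\<dots> = exp ((1 - r) * P)" by (simp add: mult_exp_exp algebra_simps)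
  also have "\<dots> \<le> exp (1 - r)"
    using \<open>1 \<le> P\<close> assms(2) by (simp add: mult_left_mono_neg[of 1 P "1 - r", simplified])
  finally show ?thesis by simp
qed

text \<open>With \<open>P = r\<^sup>b\<close> the hypotheses give \<open>\<rho>, \<rho>' \<ge> rP / exp P\<close>, so \<open>k \<approx> 2 exp P\<close> pushes the exponential
  term down to \<open>exp ((1 - r) P)\<close> while the dependence term stays of order \<open>exp (2P) \<psi> / r\<^sup>2\<close>.\<close>
lemma deviation_bound_le:
  fixes \<rho> \<rho>' \<psi> b \<alpha> :: real and r :: nat
  defines "k \<equiv> 2 * nat \<lceil>exp (real r powr b)\<rceil>"
  assumes "1 < b" "1 \<le> r" "0 \<le> \<psi>"
    and \<rho>: "1 \<le> \<rho> * exp (real r powr b) / real r powr (1 + b)"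
    and \<rho>': "1 \<le> \<rho>' * exp (real r powr b) / real r powr (1 + b)"
    and \<psi>: "exp (2 * real r powr b) / (real r)\<^sup>2 * \<psi> \<le> \<alpha> / 8" and "exp (1 - real r) \<le> \<alpha> / 2"
  shows "0 < \<rho>" and "(real k ^ 2 * \<psi> + real k * exp (- real (k div 2) * \<rho>')) / (real k * \<rho>) \<le> \<alpha>"
proof -
  define P where "P = real r powr b"
  have "real r \<le> P" unfolding P_def using assms(2,3) powr_mono[of 1 b "real r"] by simp
  have powr: "real r powr (1 + b) = real r * P" unfolding P_def using assms(3) by (simp add: powr_add)
  have "0 < real r * P" using assms(3) \<open>real r \<le> P\<close> by simp
  have \<rho>_ge: "real r * P / exp P \<le> \<rho>" "real r * P / exp P \<le> \<rho>'"
    using \<rho> \<rho>' \<open>0 < real r * P\<close> unfolding powr P_def[symmetric] by (simp_all add: le_divide_eq divide_le_eq)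
  then show \<rho>_pos: "0 < \<rho>" using inverse_le_of_ratio_le(1)[OF _ \<open>real r \<le> P\<close>] assms(3) by simp
  have "1 \<le> exp P" using \<open>real r \<le> P\<close> by simp
  moreover have "k div 2 = nat \<lceil>exp P\<rceil>" unfolding k_def P_def by simp
  ultimately have k: "0 < real k" "real k \<le> 4 * exp P" "exp P \<le> real (k div 2)"
    unfolding k_def P_def[symmetric] by linarith+
  have "exp P * exp P / (real r * real r) * \<psi> \<le> \<alpha> / 8"
    using \<psi> unfolding P_def by (simp add: power2_eq_square mult_exp_exp)
  moreover have "1 \<le> real r" using assms(3) by simp
  ultimately have "real k * \<psi> / \<rho> \<le> \<alpha> / 2"
    using dependence_term_le[OF k(1,2) _ \<open>real r \<le> P\<close> \<rho>_ge(1) assms(4)] by linarith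
  moreover have "exp (- real (k div 2) * \<rho>') / \<rho> \<le> \<alpha> / 2"
    using deviation_term_le[OF k(3) \<open>1 \<le> real r\<close> \<open>real r \<le> P\<close> \<rho>_ge] assms(8) by linarith
  moreover have "(real k ^ 2 * \<psi> + real k * exp (- real (k div 2) * \<rho>')) / (real k * \<rho>)
      = real k * \<psi> / \<rho> + exp (- real (k div 2) * \<rho>') / \<rho>"
    using k(1) \<rho>_pos by (simp add: field_simps power2_eq_square)
  ultimately show "(real k ^ 2 * \<psi> + real k * exp (- real (k div 2) * \<rho>')) / (real k * \<rho>) \<le> \<alpha>"
    by linarith
qed

lemma obtain_block_parameters:
  fixes \<rho> \<rho>' \<Psi> :: "nat \<Rightarrow> real" and b \<alpha> :: real
  assumes "1 < b" "0 < \<alpha>" "\<And>m. 0 \<le> \<Psi> m"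
    and \<rho>: "filterlim (\<lambda>m. \<rho> m * exp (real m powr b) / real m powr (1 + b)) at_top sequentially"
    and \<rho>': "filterlim (\<lambda>m. \<rho>' m * exp (real m powr b) / real m powr (1 + b)) at_top sequentially"
    and \<Psi>: "(\<lambda>m. exp (2 * real m powr b) / (real m)\<^sup>2 * \<Psi> m) \<longlonglongrightarrow> 0"
  obtains k r where "1 \<le> k" "1 \<le> r" "0 < \<rho> r"
    "(real k ^ 2 * \<Psi> r + real k * exp (- real (k div 2) * \<rho>' r)) / (real k * \<rho> r) \<le> \<alpha>"
proof -
  have "eventually (\<lambda>m. 1 \<le> \<rho> m * exp (real m powr b) / real m powr (1 + b)) sequentially"
    "eventually (\<lambda>m. 1 \<le> \<rho>' m * exp (real m powr b) / real m powr (1 + b)) sequentially"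
    using \<rho> \<rho>' unfolding filterlim_at_top by blast+
  moreover have "eventually (\<lambda>m. exp (2 * real m powr b) / (real m)\<^sup>2 * \<Psi> m < \<alpha> / 8) sequentially"
    using \<Psi> assms(2) by (intro order_tendstoD(2)) auto
  moreover have "eventually (\<lambda>m. max 1 (1 - ln (\<alpha> / 2)) \<le> real m) sequentially"
    using filterlim_real_sequentially unfolding filterlim_at_top by blast
  ultimately have "eventually (\<lambda>m. 1 \<le> \<rho> m * exp (real m powr b) / real m powr (1 + b)
      \<and> 1 \<le> \<rho>' m * exp (real m powr b) / real m powr (1 + b)
      \<and> exp (2 * real m powr b) / (real m)\<^sup>2 * \<Psi> m < \<alpha> / 8 \<and> max 1 (1 - ln (\<alpha> / 2)) \<le> real m) sequentially"
    by (intro eventually_conj)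
  then obtain r where r: "1 \<le> \<rho> r * exp (real r powr b) / real r powr (1 + b)"
    "1 \<le> \<rho>' r * exp (real r powr b) / real r powr (1 + b)"
    "exp (2 * real r powr b) / (real r)\<^sup>2 * \<Psi> r < \<alpha> / 8" "max 1 (1 - ln (\<alpha> / 2)) \<le> real r"
    unfolding eventually_sequentially by blast
  have "exp (1 - real r) \<le> exp (ln (\<alpha> / 2))" using r(4) by simp
  then have "exp (1 - real r) \<le> \<alpha> / 2" using assms(2) by simp
  moreover have "1 \<le> r" using r(4) by simp
  moreover have "1 \<le> 2 * nat \<lceil>exp (real r powr b)\<rceil>" by (simp add: Suc_le_eq)
  ultimately show ?thesis
    using that deviation_bound_le[OF assms(1) _ assms(3) r(1,2) less_imp_le[OF r(3)]] by blast
qed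

section \<open>Stationary weakly dependent processes\<close>

locale stationary_weakly_dependent = prob_space M for M :: "'w measure" +
  fixes X :: "int \<Rightarrow> 'w \<Rightarrow> 'b::euclidean_space" and T :: "int set" and \<Psi> :: "nat \<Rightarrow> real"
  assumes positive_in_T: "\<And>t. 1 \<le> t \<Longrightarrow> t \<in> T"
    and measurable_X: "\<And>t. t \<in> T \<Longrightarrow> X t \<in> borel_measurable M"
    and stationary: "stationary_on M T X"
    and weakly_dependent: "weakly_dependent_on M T X \<Psi>"
begin

lemma measurable_X_positive [measurable]: "X (int j + 1) \<in> borel_measurable M"
  using measurable_X positive_in_T by simp

lemma Psi_nonneg: "0 \<le> \<Psi> r"
  using weakly_dependent decseq_ge unfolding weakly_dependent_on_def by blast

definition sample_block :: "nat \<Rightarrow> nat \<Rightarrow> 'w \<Rightarrow> nat \<Rightarrow> 'b" where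
  "sample_block s r w i = (if i < r then X (int (s + i) + 1) w else 0)"

lemma block_metric_sample_block:
  "block_metric r (sample_block s r w) y = L2_set (\<lambda>i. norm (X (int (s + i) + 1) w - y i)) {..<r}"
  unfolding block_metric_def sample_block_def by (intro L2_set_cong) auto

lemma measurable_block_metric_sample_block [measurable]:
  "(\<lambda>w. block_metric r (sample_block s r w) y) \<in> borel_measurable M"
  unfolding block_metric_sample_block L2_set_def by measurable

lemma block_dist_eq_block_metric: "block_dist X r y w = block_metric r (sample_block 0 r w) y"
  unfolding block_dist_def block_metric_sample_block L2_set_def by simp

lemma measure_shifted_block:
  assumes "B \<in> sets (PiM {..<r} (\<lambda>_. borel))"
  shows "measure M {w \<in> space M. (\<lambda>j\<in>{..<r}. X (int (s + j) + 1) w) \<in> B}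
       = measure M {w \<in> space M. (\<lambda>j\<in>{..<r}. X (int j + 1) w) \<in> B}"
proof -
  let ?P = "PiM {..<r} (\<lambda>_. borel)"
  have "distr M ?P (\<lambda>w. \<lambda>j\<in>{..<r}. X (int j + 1) w) = distr M ?P (\<lambda>w. \<lambda>j\<in>{..<r}. X (int j + 1 + int s) w)"
    using stationary[unfolded stationary_on_def, rule_format, of r "\<lambda>j. int j + 1" "int s"] positive_in_T
    by simp
  moreover have "X (int j + 1 + int s) = X (int (s + j) + 1)" for j by (simp add: algebra_simps)
  ultimately have "measure (distr M ?P (\<lambda>w. \<lambda>j\<in>{..<r}. X (int (s + j) + 1) w)) B
    = measure (distr M ?P (\<lambda>w. \<lambda>j\<in>{..<r}. X (int j + 1) w)) B"
    by simp
  moreover have "(\<lambda>w. \<lambda>j\<in>{..<r}. X (int (s + j) + 1) w) \<in> measurable M ?P"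
    "(\<lambda>w. \<lambda>j\<in>{..<r}. X (int j + 1) w) \<in> measurable M ?P"
    by measurable
  ultimately show ?thesis
    using assms by (simp add: measure_distr vimage_def Int_def conj_commute)
qed

lemma shifted_block_mem_block_far_iff:
  "(\<lambda>j\<in>{..<r}. X (int (s + j) + 1) w) \<in> {z \<in> space (PiM {..<r} (\<lambda>_. borel)). block_metric r z y > h}
    \<longleftrightarrow> block_metric r (sample_block s r w) y > h"
proof -
  have "block_metric r (\<lambda>j\<in>{..<r}. X (int (s + j) + 1) w) y = block_metric r (sample_block s r w) y"
    by (rule block_metric_cong) (simp add: sample_block_def)
  then show ?thesis by (simp add: space_PiM)
qed

lemma measure_block_metric_gt_shift:
  "measure M {w \<in> space M. block_metric r (sample_block s r w) y > h}
   = measure M {w \<in> space M. block_metric r (sample_block 0 r w) y > h}"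
  using measure_shifted_block[OF sets_block_far_PiM[where r=r and y=y and h=h], where s=s]
    shifted_block_mem_block_far_iff[where s=s] shifted_block_mem_block_far_iff[where s=0]
  by simp

lemma rv_support_shift: "rv_support M (X (int s + 1)) = rv_support M (X 1)"
proof -
  have "measure M {w \<in> space M. dist (X (int s + 1) w) x < e} = measure M {w \<in> space M. dist (X 1 w) x < e}"
    for x e
  proof -
    have "{z \<in> space (PiM {..<1} (\<lambda>_. borel)). dist (z 0) x < e} \<in> sets (PiM {..<1::nat} (\<lambda>_. borel))"
      by measurable
    from measure_shifted_block[OF this, of s] show ?thesis by (simp add: space_PiM)
  qed
  then show ?thesis unfolding rv_support_def by simp
qed

lemma AE_X_in_rv_support:
  assumes "1 \<le> t"
  shows "AE w in M. X t w \<in> rv_support M (X 1)"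
proof -
  have t: "t = int (nat (t - 1)) + 1" using assms by simp
  have [measurable]: "X t \<in> borel_measurable M" using measurable_X positive_in_T assms by simp
  have "AE w in M. \<forall>e>0. measure M {w' \<in> space M. dist (X t w') (X t w) < e} > 0"
  proof (rule AE_mem_support[OF finite_measure])
    show "continuous_on UNIV (\<lambda>v. dist v x)" for x :: 'b by (intro continuous_intros)
    show "(\<lambda>w. dist (X t w) x) \<in> borel_measurable M" for x by measurable
  qed simp
  then have "AE w in M. X t w \<in> rv_support M (X t)" unfolding rv_support_def by simp
  moreover have "rv_support M (X t) = rv_support M (X 1)" by (subst t) (rule rv_support_shift)
  ultimately show ?thesis by simp
qed

lemma AE_sample_block_in_block_support: "AE w in M. sample_block 0 r w \<in> block_support M X r"
proof -
  have "AE w in M. \<forall>e>0.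
      measure M {w' \<in> space M. block_metric r (sample_block 0 r w') (sample_block 0 r w) < e} > 0"
    using finite_measure continuous_on_block_metric by (rule AE_mem_support) simp_all
  then show ?thesis
    unfolding block_support_def block_dist_eq_block_metric by (simp add: sample_block_def)
qed

lemma rv_support_nonempty: "rv_support M (X 1) \<noteq> {}"
proof
  assume "rv_support M (X 1) = {}"
  then have "AE w in M. False" using AE_X_in_rv_support[of 1] by simp
  then show False by simp
qed

lemma abs_cov_block_indicators_le:
  fixes i j :: "nat \<Rightarrow> int"
  assumes "1 \<le> k" "1 \<le> l" "1 \<le> r"
    and "\<forall>a<k. i a \<in> T" "\<forall>a<l. j a \<in> T"
    and "\<forall>a. Suc a < k \<longrightarrow> i a \<le> i (Suc a)" "\<forall>a. Suc a < l \<longrightarrow> j a \<le> j (Suc a)"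
    and "i (k - 1) + int r \<le> j 0"
    and B: "B \<in> sets (PiM {..<k} (\<lambda>_. borel))" "x \<in> space (PiM {..<k} (\<lambda>_. borel))" "x \<in> B"
    and C: "C \<in> sets (PiM {..<l} (\<lambda>_. borel))" "y \<in> space (PiM {..<l} (\<lambda>_. borel))" "y \<in> C"
  shows "\<bar>cov M (\<lambda>w. indicator B (\<lambda>a\<in>{..<k}. X (i a) w)) (\<lambda>w. indicator C (\<lambda>a\<in>{..<l}. X (j a) w))\<bar>
    \<le> \<Psi> r"
proof -
  have "\<exists>x\<in>space (PiM {..<k} (\<lambda>_. borel)). (indicator B x :: real) \<noteq> 0"
    "\<exists>y\<in>space (PiM {..<l} (\<lambda>_. borel)). (indicator C y :: real) \<noteq> 0"
    using B(2,3) C(2,3) by force+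
  then have "\<bar>cov M (\<lambda>w. indicator B (\<lambda>a\<in>{..<k}. X (i a) w) / sup_norm (PiM {..<k} (\<lambda>_. borel)) (indicator B))
      (\<lambda>w. indicator C (\<lambda>a\<in>{..<l}. X (j a) w) / sup_norm (PiM {..<l} (\<lambda>_. borel)) (indicator C))\<bar>
    \<le> \<Psi> r"
    using weakly_dependent[unfolded weakly_dependent_on_def, THEN conjunct2, THEN conjunct2, rule_format,
        where k=k and l=l and i=i and j=j and r=r and f="indicator B" and g="indicator C"] assms(1-8) B(1) C(1)
    by (simp add: bounded_indicator_image)
  then show ?thesis using sup_norm_indicator[OF B(2,3)] sup_norm_indicator[OF C(2,3)] by simp
qed

lemma measure_block_events_Int_le:
  fixes i j :: "nat \<Rightarrow> int"
  assumes "1 \<le> k" "1 \<le> l" "1 \<le> r"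
    and "\<forall>a<k. i a \<in> T" "\<forall>a<l. j a \<in> T"
    and "\<forall>a. Suc a < k \<longrightarrow> i a \<le> i (Suc a)" "\<forall>a. Suc a < l \<longrightarrow> j a \<le> j (Suc a)"
    and "i (k - 1) + int r \<le> j 0"
    and B: "B \<in> sets (PiM {..<k} (\<lambda>_. borel))" and C: "C \<in> sets (PiM {..<l} (\<lambda>_. borel))"
  shows "measure M {w \<in> space M. (\<lambda>a\<in>{..<k}. X (i a) w) \<in> B \<and> (\<lambda>a\<in>{..<l}. X (j a) w) \<in> C}
    \<le> measure M {w \<in> space M. (\<lambda>a\<in>{..<k}. X (i a) w) \<in> B}
      * measure M {w \<in> space M. (\<lambda>a\<in>{..<l}. X (j a) w) \<in> C} + \<Psi> r"
proof -
  define U where "U w = (\<lambda>a\<in>{..<k}. X (i a) w)" for w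
  define V where "V w = (\<lambda>a\<in>{..<l}. X (j a) w)" for w
  define E where "E = {w \<in> space M. U w \<in> B}"
  define F where "F = {w \<in> space M. V w \<in> C}"
  have "U \<in> measurable M (PiM {..<k} (\<lambda>_. borel))"
    unfolding U_def using assms(4) measurable_X by (intro measurable_restrict) auto
  then have "E \<in> sets M"
    unfolding E_def using measurable_sets[OF _ B] by (simp add: vimage_def Int_def conj_commute)
  have "V \<in> measurable M (PiM {..<l} (\<lambda>_. borel))"
    unfolding V_def using assms(5) measurable_X by (intro measurable_restrict) auto
  then have "F \<in> sets M"
    unfolding F_def using measurable_sets[OF _ C] by (simp add: vimage_def Int_def conj_commute)
  have "measure M (E \<inter> F) \<le> measure M E * measure M F + \<Psi> r"
  proof (cases "E \<inter> F = {}")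
    case True
    then show ?thesis using Psi_nonneg[of r] by simp
  next
    case False
    then obtain w where "w \<in> E" "w \<in> F" by blast
    then have "\<bar>cov M (\<lambda>w. indicator B (U w)) (\<lambda>w. indicator C (V w))\<bar> \<le> \<Psi> r"
      unfolding U_def V_def E_def F_def using assms
      by (intro abs_cov_block_indicators_le[where x="U w" and y="V w"]) (auto simp: U_def V_def space_PiM)
    moreover have "cov M (\<lambda>w. indicator B (U w)) (\<lambda>w. indicator C (V w)) = cov M (indicator E) (indicator F)"
      by (rule cov_cong) (simp_all add: E_def F_def indicator_def)
    ultimately show ?thesis
      using cov_indicator[OF \<open>E \<in> sets M\<close> \<open>F \<in> sets M\<close>] by simp
  qed
  then show ?thesis unfolding E_def F_def U_def V_def Int_def by (simp add: conj_commute conj_left_commute)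
qed

definition every_block_far :: "nat \<Rightarrow> nat \<Rightarrow> (nat \<Rightarrow> 'b) \<Rightarrow> real \<Rightarrow> 'w set" where
  "every_block_far m r y h = {w \<in> space M. \<forall>q<m. block_metric r (sample_block (2 * q * r) r w) y > h}"

lemma sets_every_block_far [measurable]: "every_block_far m r y h \<in> sets M"
  unfolding every_block_far_def by measurable

lemma interleaved_block_eq_sample_block:
  assumes "q < m"
  shows "block_metric r (\<lambda>p. (\<lambda>a\<in>{..<m * r}. X (int (interleaved_index r a) + 1) w) (q * r + p)) y
    = block_metric r (sample_block (2 * q * r) r w) y"
proof (rule block_metric_cong)
  fix p assume "p < r"
  moreover have "q * r + p < m * r" using assms \<open>p < r\<close> mult_le_mono1[of "Suc q" m r] by simp
  ultimately show "(\<lambda>a\<in>{..<m * r}. X (int (interleaved_index r a) + 1) w) (q * r + p) = sample_block (2 * q * r) r w p"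
    by (simp add: interleaved_index_block sample_block_def)
qed

text \<open>The first \<open>m\<close> blocks, at times \<open>0, 2r, \<dots>, 2(m - 1)r\<close>, end at least \<open>r\<close> steps before the block
  at time \<open>2mr\<close> begins, so weak dependence applies with gap \<open>r\<close>.\<close>
lemma measure_every_block_far_Suc_le:
  assumes "1 \<le> r" "1 \<le> m"
  shows "measure M (every_block_far (Suc m) r y h)
    \<le> measure M (every_block_far m r y h) * measure M {w \<in> space M. block_metric r (sample_block 0 r w) y > h}
      + \<Psi> r"
proof -
  define i where "i a = int (interleaved_index r a) + 1" for a
  define j where "j a = int (2 * m * r + a) + 1" for a
  define B where
    "B = {z \<in> space (PiM {..<m * r} (\<lambda>_. borel)). \<forall>q\<in>{..<m}. block_metric r (\<lambda>p. z (q * r + p)) y > h}"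
  define C where "C = {z \<in> space (PiM {..<r} (\<lambda>_. borel)). block_metric r z y > h}"
  have in_B: "(\<lambda>a\<in>{..<m * r}. X (i a) w) \<in> B \<longleftrightarrow> w \<in> every_block_far m r y h" if "w \<in> space M" for w
    using that interleaved_block_eq_sample_block[of _ m r w y]
    unfolding B_def every_block_far_def i_def by (simp add: space_PiM Ball_def)
  have in_C: "(\<lambda>a\<in>{..<r}. X (j a) w) \<in> C \<longleftrightarrow> block_metric r (sample_block (2 * m * r) r w) y > h" for w
    unfolding C_def j_def by (rule shifted_block_mem_block_far_iff)
  have "i (m * r - 1) + int r \<le> j 0"
    using interleaved_index_last[OF assms(2,1)] unfolding i_def j_def by linarith
  then have "measure M {w \<in> space M. (\<lambda>a\<in>{..<m * r}. X (i a) w) \<in> B \<and> (\<lambda>a\<in>{..<r}. X (j a) w) \<in> C}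
    \<le> measure M {w \<in> space M. (\<lambda>a\<in>{..<m * r}. X (i a) w) \<in> B}
      * measure M {w \<in> space M. (\<lambda>a\<in>{..<r}. X (j a) w) \<in> C} + \<Psi> r"
    using assms positive_in_T sets_blocks_far_PiM sets_block_far_PiM interleaved_index_le_Suc
    by (intro measure_block_events_Int_le) (simp_all add: i_def j_def B_def C_def)
  also have "{w \<in> space M. (\<lambda>a\<in>{..<m * r}. X (i a) w) \<in> B \<and> (\<lambda>a\<in>{..<r}. X (j a) w) \<in> C}
      = every_block_far (Suc m) r y h"
    using in_B in_C by (auto simp: every_block_far_def less_Suc_eq)
  also have "{w \<in> space M. (\<lambda>a\<in>{..<m * r}. X (i a) w) \<in> B} = every_block_far m r y h"
    using in_B sets.sets_into_space[OF sets_every_block_far] by blast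
  also have "measure M {w \<in> space M. (\<lambda>a\<in>{..<r}. X (j a) w) \<in> C}
      = measure M {w \<in> space M. block_metric r (sample_block 0 r w) y > h}"
    using in_C measure_block_metric_gt_shift by simp
  finally show ?thesis .
qed

lemma measure_every_block_far_le:
  fixes y :: "nat \<Rightarrow> 'b" and h :: real
  assumes "1 \<le> r"
  defines "p \<equiv> measure M {w \<in> space M. block_metric r (sample_block 0 r w) y > h}"
  shows "measure M (every_block_far m r y h) \<le> p ^ m + real m * \<Psi> r"
proof (induction m)
  case 0
  then show ?case by (simp add: every_block_far_def prob_space)
next
  case (Suc m)
  have p: "0 \<le> p" "p \<le> 1" unfolding p_def by simp_all
  show ?case
  proof (cases "m = 0")
    case True
    then show ?thesis using Psi_nonneg[of r] by (simp add: every_block_far_def p_def)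
  next
    case False
    then have "measure M (every_block_far (Suc m) r y h) \<le> measure M (every_block_far m r y h) * p + \<Psi> r"
      unfolding p_def using assms by (intro measure_every_block_far_Suc_le) auto
    also have "\<dots> \<le> (p ^ m + real m * \<Psi> r) * p + \<Psi> r"
      using Suc.IH p by (intro add_right_mono mult_right_mono) auto
    also have "\<dots> \<le> p ^ Suc m + real (Suc m) * \<Psi> r"
    proof -
      have "p * (real m * \<Psi> r) \<le> real m * \<Psi> r"
        using p Psi_nonneg[of r] by (intro mult_left_le_one_le) auto
      then show ?thesis by (simp add: algebra_simps)
    qed
    finally show ?thesis .
  qed
qed

lemma measure_every_block_far_le_exp:
  assumes "1 \<le> r" and "y \<in> block_support M X r"
  shows "measure M (every_block_far m r y h) \<le> exp (- real m * rho M X r h) + real m * \<Psi> r"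
proof -
  define p where "p = measure M {w \<in> space M. block_metric r (sample_block 0 r w) y > h}"
  have "{w \<in> space M. block_metric r (sample_block 0 r w) y > h}
      = space M - {w \<in> space M. block_metric r (sample_block 0 r w) y \<le> h}"
    by auto
  then have "p = 1 - measure M {w \<in> space M. block_metric r (sample_block 0 r w) y \<le> h}"
    unfolding p_def by (simp add: prob_compl)
  then have "p \<le> 1 - rho M X r h"
    using rho_le_measure[OF assms(2), of h] by (simp add: block_dist_eq_block_metric)
  moreover have "0 \<le> p" unfolding p_def by simp
  ultimately have "p ^ m \<le> exp (- rho M X r h) ^ m"
    using exp_ge_add_one_self[of "- rho M X r h"] by (intro power_mono) auto
  then have "p ^ m \<le> exp (- real m * rho M X r h)" by (simp add: exp_of_nat_mult[symmetric])
  then show ?thesis using measure_every_block_far_le[OF assms(1), where y=y and h=h and m=m] unfolding p_def by simp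
qed

lemma obtain_block_near_support_point:
  assumes "1 \<le> r" "y \<in> rv_support M (X 1)" "0 < \<eta>"
  obtains z where "z \<in> block_support M X r" "dist (z 0) y < \<eta>"
proof -
  define N where "N = {w \<in> space M. dist (X 1 w) y < \<eta>}"
  have [measurable]: "X 1 \<in> borel_measurable M" using measurable_X_positive[of 0] by simp
  have "N \<in> sets M" unfolding N_def by measurable
  have "measure M N > 0" using assms(2,3) unfolding N_def rv_support_def by blast
  then have "N \<notin> null_sets M" by (auto simp: measure_def null_setsD1)
  then have "\<not> (AE w in M. w \<notin> N)" using AE_iff_null_sets[OF \<open>N \<in> sets M\<close>] by blast
  have "\<exists>w\<in>N. sample_block 0 r w \<in> block_support M X r"
  proof (rule ccontr)
    assume none: "\<not> ?thesis"
    have "AE w in M. sample_block 0 r w \<in> block_support M X r \<longrightarrow> w \<notin> N"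
      using none by (intro AE_I2) blast
    with AE_sample_block_in_block_support[of r] have "AE w in M. w \<notin> N" by (rule AE_mp)
    then show False using \<open>\<not> (AE w in M. w \<notin> N)\<close> by contradiction
  qed
  then obtain w where "w \<in> N" "sample_block 0 r w \<in> block_support M X r" by blast
  moreover have "sample_block 0 r w 0 = X 1 w" using assms(1) by (simp add: sample_block_def)
  ultimately show ?thesis using that unfolding N_def by auto
qed

lemma hausdorff_dist_gt_imp_every_block_far:
  assumes "1 \<le> k" "1 \<le> r" "k * r \<le> n" "0 < eps" "compact S" "S = rv_support M (X 1)"
    and cover: "\<And>z. z \<in> block_support M X r \<Longrightarrow> \<exists>c\<in>C. block_metric r z c \<le> eps / 2"
    and w: "w \<in> space M" "\<forall>t\<in>{1..n}. X (int t) w \<in> S" "hausdorff_dist (sample_set X n w) S > eps"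
  shows "\<exists>c\<in>C. w \<in> every_block_far (k div 2) r c (eps / 2)"
proof -
  define F where "F = sample_set X n w"
  have F: "F = (\<lambda>t. X (int t) w) ` {1..n}" unfolding F_def sample_set_def by auto
  have "1 \<le> n" using assms(1-3) by (metis le_trans mult_le_mono nat_mult_1)
  then have "F \<noteq> {}" "F \<subseteq> S" using w(2) unfolding F by auto
  then obtain y where "y \<in> S" "infdist y F > eps"
    using obtain_point_far_from_subset[of F S eps] compact_imp_bounded[OF assms(5)] assms(4) w(3)
    unfolding F_def by auto
  moreover have "y \<in> rv_support M (X 1)" "0 < infdist y F - eps" using calculation assms(6) by auto
  ultimately obtain z where z: "z \<in> block_support M X r" "dist (z 0) y < infdist y F - eps"
    using obtain_block_near_support_point[OF assms(2), of y "infdist y F - eps"] by blast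
  then obtain c where c: "c \<in> C" "block_metric r z c \<le> eps / 2" using cover by blast
  have "eps / 2 < block_metric r (sample_block (2 * q * r) r w) c" if "q < k div 2" for q
  proof (rule block_metric_gt_if_first_entry_far[where y=y])
    have "(2 * q + 1) * r \<le> k * r" using that by (intro mult_le_mono1) linarith
    then have "2 * q * r + 1 \<in> {1..n}" using assms(2,3) by (simp add: algebra_simps)
    moreover have "sample_block (2 * q * r) r w 0 = X (int (2 * q * r + 1)) w"
      using assms(2) by (simp add: sample_block_def add.commute)
    ultimately show "sample_block (2 * q * r) r w 0 \<in> F" unfolding F by blast
  qed (use assms(2) z(2) c(2) in auto)
  then show ?thesis using c(1) w(1) unfolding every_block_far_def by blast
qed

lemma measure_hausdorff_dist_gt_le_sum:
  assumes "1 \<le> k" "1 \<le> r" "k * r \<le> n" "0 < eps" "compact S" "S = rv_support M (X 1)" "finite C"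
    and "\<And>z. z \<in> block_support M X r \<Longrightarrow> \<exists>c\<in>C. block_metric r z c \<le> eps / 2"
  shows "measure M {w \<in> space M. hausdorff_dist (sample_set X n w) S > eps}
    \<le> (\<Sum>c\<in>C. measure M (every_block_far (k div 2) r c (eps / 2)))"
proof -
  have "AE w in M. \<forall>t\<in>{1..n}. X (int t) w \<in> S"
    using assms(6) by (intro AE_finite_allI) (auto intro!: AE_X_in_rv_support)
  then have "AE w in M. w \<in> {w \<in> space M. hausdorff_dist (sample_set X n w) S > eps}
      \<longrightarrow> w \<in> (\<Union>c\<in>C. every_block_far (k div 2) r c (eps / 2))"
    using AE_space by eventually_elim (use hausdorff_dist_gt_imp_every_block_far[OF assms(1-6,8)] in blast)
  then have "measure M {w \<in> space M. hausdorff_dist (sample_set X n w) S > eps}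
      \<le> measure M (\<Union>c\<in>C. every_block_far (k div 2) r c (eps / 2))"
    by (rule finite_measure_mono_AE) (use assms(7) in auto)
  also have "\<dots> \<le> (\<Sum>c\<in>C. measure M (every_block_far (k div 2) r c (eps / 2)))"
    by (rule finite_measure_subadditive_finite) (use assms(7) in auto)
  finally show ?thesis .
qed

lemma measure_hausdorff_dist_gt_le:
  assumes "compact S" "S = rv_support M (X 1)" "0 < eps" "1 \<le> k" "1 \<le> r" "k * r \<le> n"
    and "0 < rho M X r (eps / 4)"
  shows "measure M {w \<in> space M. hausdorff_dist (sample_set X n w) S > eps}
    \<le> (real k ^ 2 * \<Psi> r + real k * exp (- real (k div 2) * rho M X r (eps / 2)))
      / (real k * rho M X r (eps / 4))"
proof -
  let ?\<rho> = "rho M X r (eps / 4)" and ?bound = "exp (- real (k div 2) * rho M X r (eps / 2)) + real k * \<Psi> r"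
  have "?\<rho> \<le> measure M {w \<in> space M. block_metric r (sample_block 0 r w) x \<le> eps / 4}"
    if "x \<in> block_support M X r" for x
    using rho_le_measure[OF that, of "eps / 4"] unfolding block_dist_eq_block_metric .
  then obtain C where C: "finite C" "C \<subseteq> block_support M X r" "real (card C) * ?\<rho> \<le> 1"
    and cover: "\<And>z. z \<in> block_support M X r \<Longrightarrow> \<exists>c\<in>C. block_metric r z c \<le> 2 * (eps / 4)"
    using block_metric.obtain_finite_net[OF prob_space_axioms assms(7), where r=r and d="eps / 4"
        and A="block_support M X r" and Y="sample_block 0 r"] assms(3) by auto
  have "measure M {w \<in> space M. hausdorff_dist (sample_set X n w) S > eps}
      \<le> (\<Sum>c\<in>C. measure M (every_block_far (k div 2) r c (eps / 2)))"
    using cover by (intro measure_hausdorff_dist_gt_le_sum[OF assms(4,5,6,3,1,2) C(1)]) simp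
  also have "\<dots> \<le> (\<Sum>c\<in>C. ?bound)"
  proof (rule sum_mono)
    fix c assume "c \<in> C"
    then have "measure M (every_block_far (k div 2) r c (eps / 2))
        \<le> exp (- real (k div 2) * rho M X r (eps / 2)) + real (k div 2) * \<Psi> r"
      using C(2) assms(5) by (intro measure_every_block_far_le_exp) auto
    moreover have "real (k div 2) * \<Psi> r \<le> real k * \<Psi> r"
      using Psi_nonneg[of r] by (intro mult_right_mono) auto
    ultimately show "measure M (every_block_far (k div 2) r c (eps / 2)) \<le> ?bound" by linarith
  qed
  also have "\<dots> \<le> ?bound / ?\<rho>"
  proof -
    have "real (card C) \<le> 1 / ?\<rho>" using C(3) assms(7) by (simp add: le_divide_eq)
    then show ?thesis using Psi_nonneg[of r] by (auto dest: mult_right_mono[of _ _ ?bound])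
  qed
  also have "\<dots> = (real k ^ 2 * \<Psi> r + real k * exp (- real (k div 2) * rho M X r (eps / 2)))
      / (real k * ?\<rho>)"
    using assms(4) by (simp add: divide_simps power2_eq_square algebra_simps)
  finally show ?thesis .
qed

lemma sample_set_eq_image: "sample_set X n w = (\<lambda>j. X (int j + 1) w) ` {..<n}"
proof -
  have "sample_set X n w = (\<lambda>t. X (int t) w) ` {1..n}" unfolding sample_set_def by auto
  also have "{1..n} = Suc ` {..<n}"
    by (simp add: lessThan_atLeast0 image_Suc_atLeastLessThan atLeastLessThanSuc_atLeastAtMost)
  finally show ?thesis by (simp add: image_image add.commute)
qed

lemma sets_hausdorff_dist_le:
  assumes "1 \<le> n" "compact S" "S \<noteq> {}"
  shows "{w \<in> space M. hausdorff_dist (sample_set X n w) S \<le> eps} \<in> sets M"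
proof -
  obtain D where D: "countable D" "D \<subseteq> S" "S \<subseteq> closure D" using separable by blast
  have "hausdorff_dist (sample_set X n w) S \<le> eps \<longleftrightarrow> (\<forall>j\<in>{..<n}. infdist (X (int j + 1) w) S \<le> eps)
      \<and> (\<forall>y\<in>D. \<exists>j\<in>{..<n}. dist y (X (int j + 1) w) \<le> eps)" for w
  proof -
    have "{..<n} \<noteq> {}" using assms(1) by (simp add: lessThan_empty_iff)
    then have "finite (sample_set X n w)" "sample_set X n w \<noteq> {}" unfolding sample_set_eq_image by auto
    from hausdorff_dist_le_iff[OF this assms(2,3) D(2,3)] \<open>{..<n} \<noteq> {}\<close> show ?thesis
      by (simp add: sample_set_eq_image)
  qed
  moreover have "(\<lambda>x. infdist x S) \<in> borel_measurable borel"
    by (intro borel_measurable_continuous_onI continuous_on_infdist continuous_on_id)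
  then have [measurable]: "(\<lambda>w. infdist (X (int j + 1) w) S) \<in> borel_measurable M" for j
    by (rule measurable_compose[OF measurable_X_positive])
  have "{w \<in> space M. \<forall>y\<in>D. \<exists>j\<in>{..<n}. dist y (X (int j + 1) w) \<le> eps} \<in> sets M"
    by (rule sets.sets_Collect_countable_All'[OF _ D(1)]) measurable
  ultimately show ?thesis by simp
qed

lemma asymp_dense_if_growth:
  assumes "compact S" "S = rv_support M (X 1)" "1 < b" "0 < e0"
    and \<rho>: "\<And>eps. 0 < eps \<Longrightarrow> eps < e0 \<Longrightarrow>
      filterlim (\<lambda>m. rho M X m eps * exp (real m powr b) / real m powr (1 + b)) at_top sequentially"
    and \<Psi>: "(\<lambda>m. exp (2 * real m powr b) / (real m)\<^sup>2 * \<Psi> m) \<longlonglongrightarrow> 0"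
  shows "asymp_dense M X S"
  unfolding asymp_dense_def
proof (intro exI[of _ e0] conjI allI impI assms(4))
  fix eps \<alpha> :: real
  assume eps: "0 < eps \<and> eps < e0" and \<alpha>: "0 < \<alpha> \<and> \<alpha> < 1"
  obtain k r where kr: "1 \<le> k" "1 \<le> r" "0 < rho M X r (eps / 4)"
    "(real k ^ 2 * \<Psi> r + real k * exp (- real (k div 2) * rho M X r (eps / 2)))
      / (real k * rho M X r (eps / 4)) \<le> \<alpha>"
    using obtain_block_parameters[OF assms(3), of \<alpha> \<Psi> "\<lambda>m. rho M X m (eps / 4)" "\<lambda>m. rho M X m (eps / 2)"]
      \<rho>[of "eps / 4"] \<rho>[of "eps / 2"] eps \<alpha> \<Psi> Psi_nonneg by auto
  show "\<exists>n0. \<forall>n\<ge>n0. measure M {w \<in> space M. hausdorff_dist (sample_set X n w) S \<le> eps} \<ge> 1 - \<alpha>"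
  proof (intro exI[of _ "k * r"] allI impI)
    fix n assume "k * r \<le> n"
    then have "1 \<le> n" using kr(1,2) by (metis le_trans mult_le_mono nat_mult_1)
    then have "{w \<in> space M. hausdorff_dist (sample_set X n w) S \<le> eps} \<in> sets M"
      using assms(1,2) rv_support_nonempty by (intro sets_hausdorff_dist_le) auto
    moreover have "{w \<in> space M. hausdorff_dist (sample_set X n w) S > eps}
        = space M - {w \<in> space M. hausdorff_dist (sample_set X n w) S \<le> eps}"
      by auto
    ultimately have "measure M {w \<in> space M. hausdorff_dist (sample_set X n w) S > eps}
        = 1 - measure M {w \<in> space M. hausdorff_dist (sample_set X n w) S \<le> eps}"
      by (simp add: prob_compl)
    moreover have "measure M {w \<in> space M. hausdorff_dist (sample_set X n w) S > eps} \<le> \<alpha>"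
      using measure_hausdorff_dist_gt_le[OF assms(1,2) _ kr(1,2) \<open>k * r \<le> n\<close> kr(3)] kr(4) eps by linarith
    ultimately show "measure M {w \<in> space M. hausdorff_dist (sample_set X n w) S \<le> eps} \<ge> 1 - \<alpha>"
      by linarith
  qed
qed

end

theorem proposition4p4:
  fixes M :: "'w measure" and X :: "int \<Rightarrow> 'w \<Rightarrow> 'b::euclidean_space"
    and T :: "int set" and \<Psi> :: "nat \<Rightarrow> real" and S :: "'b set"
  assumes "prob_space M"
    and "T = UNIV \<or> T = {0..} \<or> T = {1..}"
    and "\<And>t. t \<in> T \<Longrightarrow> X t \<in> borel_measurable M"
    and "stationary_on M T X"
    and "weakly_dependent_on M T X \<Psi>"
    and "compact S"
    and "rv_support M (X 1) = S"
  shows "(\<forall>eps>0. \<forall>(n::nat) (k::nat) (r::nat). k \<ge> 1 \<and> r \<ge> 1 \<and> k * r \<le> n \<and> rho M X r (eps / 4) > 0 \<longrightarrow>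
           measure M {w \<in> space M. hausdorff_dist (sample_set X n w) S > eps}
           \<le> (real k ^ 2 * \<Psi> r + real k * exp (- real (k div 2) * rho M X r (eps / 2)))
             / (real k * rho M X r (eps / 4)))
    \<and> ((\<exists>b>1. \<exists>e0>0.
            (\<forall>eps. 0 < eps \<and> eps < e0 \<longrightarrow>
               filterlim (\<lambda>m::nat. rho M X m eps * exp (real m powr b) / real m powr (1 + b)) at_top sequentially)
            \<and> ((\<lambda>m::nat. exp (2 * real m powr b) / (real m)\<^sup>2 * \<Psi> m) \<longlonglongrightarrow> 0))
         \<longrightarrow> asymp_dense M X S)"
proof -
  interpret stationary_weakly_dependent M X T \<Psi>
    using assms(1-5) by (intro stationary_weakly_dependent.intro stationary_weakly_dependent_axioms.intro) auto
  show ?thesis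
    using measure_hausdorff_dist_gt_le[OF assms(6) assms(7)[symmetric]]
      asymp_dense_if_growth[OF assms(6) assms(7)[symmetric]]
    by blast
qed

end
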